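(* Fix $d\ge1$. The set of $F$-norms on $\mathbb{R}^{d+1}$, equipped with the multiplication $*$, is a commutative monoid with identity element the sup-norm $\|\mathbf{x}\|_\infty=\max_{0\le i\le d}|x_i|$. The only invertible elements are the $F$-norms generated by nonrandom vectors.
   Context: Condition $(\mathcal{H})$ on a random vector $\mathbf{X}=(X_1,\dots,X_d)$: each $X_i$ is almost surely nonnegative with $0<E(X_i)<\infty$. For such $\mathbf{X}$ with distribution function $F$, the $F$-norm is $\|\mathbf{x}\|_F=E(\max(|x_0|,|x_1|X_1,\dots,|x_d|X_d))$, $\mathbf{x}\in\mathbb{R}^{d+1}$; $\mathbf{X}$ is said to generate it, and an $F$-norm is any norm on $\mathbb{R}^{d+1}$ of this form. The product $\|\cdot\|_F*\|\cdot\|_G$ is the $F$-norm generated by the componentwise product $(X_1Y_1,\dots,X_dY_d)$, where $\mathbf{X}\sim F$ and $\mathbf{Y}\sim G$ are independent and satisfy $(\mathcal{H})$. An $F$-norm generated by a nonrandom vector $\mathbf{c}>\mathbf{0}$ is $\max(|x_0|,c_1|x_1|,\dots,c_d|x_d|)$. *)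

theory Defs
  imports "HOL-Probability.Probability" "HOL-Algebra.Group"
begin

text \<open>Vectors of R^(d+1) are represented as functions nat => real; only the
coordinates 0..d matter. A random vector (X_1,...,X_d) is represented by its
distribution, a measure on the product space indexed by {1..d}.\<close>

definition vec_space :: "nat \<Rightarrow> (nat \<Rightarrow> real) measure" where
  "vec_space d = PiM {1..d} (\<lambda>_. borel)"

definition condH :: "nat \<Rightarrow> (nat \<Rightarrow> real) measure \<Rightarrow> bool" where
  "condH d P \<longleftrightarrow> prob_space P \<and> sets P = sets (vec_space d) \<and>
     (\<forall>i\<in>{1..d}. (AE y in P. 0 \<le> y i) \<and> integrable P (\<lambda>y. y i) \<and>
                   0 < integral\<^sup>L P (\<lambda>y. y i))"

definition fnorm :: "nat \<Rightarrow> (nat \<Rightarrow> real) measure \<Rightarrow> (nat \<Rightarrow> real) \<Rightarrow> real" where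
  "fnorm d P x = integral\<^sup>L P (\<lambda>y. Max (insert \<bar>x 0\<bar> ((\<lambda>i. \<bar>x i\<bar> * y i) ` {1..d})))"

definition fnorms :: "nat \<Rightarrow> ((nat \<Rightarrow> real) \<Rightarrow> real) set" where
  "fnorms d = {fnorm d P | P. condH d P}"

text \<open>Distribution of the componentwise product (X_1 Y_1, ..., X_d Y_d) of
independent X ~ P and Y ~ Q.\<close>
definition prod_gen :: "nat \<Rightarrow> (nat \<Rightarrow> real) measure \<Rightarrow> (nat \<Rightarrow> real) measure
                         \<Rightarrow> (nat \<Rightarrow> real) measure" where
  "prod_gen d P Q = distr (P \<Otimes>\<^sub>M Q) (vec_space d) (\<lambda>(y, z). \<lambda>i\<in>{1..d}. y i * z i)"

definition fmult :: "nat \<Rightarrow> ((nat \<Rightarrow> real) \<Rightarrow> real) \<Rightarrow> ((nat \<Rightarrow> real) \<Rightarrow> real)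
                      \<Rightarrow> ((nat \<Rightarrow> real) \<Rightarrow> real)" where
  "fmult d N1 N2 = fnorm d (prod_gen d (SOME P. condH d P \<and> fnorm d P = N1)
                                     (SOME Q. condH d Q \<and> fnorm d Q = N2))"

definition sup_norm :: "nat \<Rightarrow> (nat \<Rightarrow> real) \<Rightarrow> real" where
  "sup_norm d x = Max ((\<lambda>i. \<bar>x i\<bar>) ` {0..d})"

definition const_gen :: "nat \<Rightarrow> (nat \<Rightarrow> real) \<Rightarrow> (nat \<Rightarrow> real) measure" where
  "const_gen d c = return (vec_space d) (restrict c {1..d})"

definition fnorm_monoid :: "nat \<Rightarrow> ((nat \<Rightarrow> real) \<Rightarrow> real) monoid" where
  "fnorm_monoid d = \<lparr>carrier = fnorms d, mult = fmult d, one = sup_norm d\<rparr>"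

end

theory Submission
  imports Defs
begin

text \<open>Write \<open>G(x, y) = max(|x\<^sub>0|, |x\<^sub>1| y\<^sub>1, ..., |x\<^sub>d| y\<^sub>d)\<close>. For \<open>y \<ge> 0\<close> one has
  \<open>G(x, y z) = G(x', z)\<close> with \<open>x' = (x\<^sub>0, x\<^sub>1 y\<^sub>1, ..., x\<^sub>d y\<^sub>d)\<close>, so by Tonelli the
  F-norm generated by \<open>X Y\<close> is, at \<open>x\<close>, the \<open>X\<close>-average of the F-norm generated by \<open>Y\<close>
  at \<open>x'\<close>: it depends on \<open>Y\<close> only through its F-norm, and symmetrically on \<open>X\<close>.
  Commutativity and associativity hold already for the distributions of the products,
  and the constant vector \<open>1\<close> generates the sup-norm. If \<open>X Y\<close> generates the sup-norm,
  evaluation at \<open>e\<^sub>i\<close> and \<open>e\<^sub>0 + e\<^sub>i\<close> gives \<open>E max(0, X\<^sub>i Y\<^sub>i) = E max(1, X\<^sub>i Y\<^sub>i) = 1\<close>,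
  hence \<open>X\<^sub>i Y\<^sub>i = 1\<close> almost surely, and by independence \<open>X\<^sub>i\<close> is almost surely constant.\<close>

lemma pair_prob_spaceI: "prob_space P \<Longrightarrow> prob_space Q \<Longrightarrow> pair_prob_space P Q"
  by (simp add: pair_prob_space_def pair_sigma_finite_def prob_space_imp_sigma_finite)

lemma measure_eqI_nn_integral:
  assumes "sets M = sets N"
    and "\<And>f. f \<in> borel_measurable M \<Longrightarrow> (\<integral>\<^sup>+x. f x \<partial>M) = (\<integral>\<^sup>+x. f x \<partial>N)"
  shows "M = N"
proof (rule measure_eqI)
  fix A assume "A \<in> sets M"
  then show "emeasure M A = emeasure N A"
    using assms(2)[of "indicator A"] assms(1) by (simp add: nn_integral_indicator)
qed fact

lemma integrable_pos_iff_nn_integral: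
  fixes f :: "'a \<Rightarrow> real"
  assumes "f \<in> borel_measurable M" "AE x in M. 0 \<le> f x"
  shows "integrable M f \<and> 0 < integral\<^sup>L M f \<longleftrightarrow>
    0 < (\<integral>\<^sup>+x. ennreal (f x) \<partial>M) \<and> (\<integral>\<^sup>+x. ennreal (f x) \<partial>M) < \<infinity>"
  by (auto simp: integral_eq_nn_integral[OF assms] enn2real_positive_iff intro: integrableI_nonneg[OF assms])

lemma AE_eq_if_AE_le_nn_integral_eq:
  assumes [measurable]: "f \<in> borel_measurable M" "g \<in> borel_measurable M"
    and le: "AE x in M. f x \<le> g x"
    and eq: "(\<integral>\<^sup>+x. f x \<partial>M) = (\<integral>\<^sup>+x. g x \<partial>M)" and fin: "(\<integral>\<^sup>+x. f x \<partial>M) \<noteq> \<infinity>"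
  shows "AE x in M. f x = g x"
proof -
  have "AE x in M. g x \<le> f x"
    using nn_integral_less[OF assms(1,2) fin le] eq by auto
  with le show ?thesis
    by eventually_elim simp
qed

lemma (in prob_space) AE_eq_1_if_nn_integral_max_eq_1:
  assumes [measurable]: "f \<in> borel_measurable M"
    and max0: "(\<integral>\<^sup>+x. ennreal (max 0 (f x)) \<partial>M) = 1"
    and max1: "(\<integral>\<^sup>+x. ennreal (max 1 (f x)) \<partial>M) = 1"
  shows "AE x in M. f x = 1"
proof -
  have "AE x in M. ennreal 1 = ennreal (max 1 (f x))"
    using max1 by (intro AE_eq_if_AE_le_nn_integral_eq) (auto simp: emeasure_space_1)
  then have le: "AE x in M. f x \<le> 1"
    by eventually_elim simp
  have "AE x in M. ennreal (max 0 (f x)) = ennreal 1"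
    using max0 le by (intro AE_eq_if_AE_le_nn_integral_eq) (auto simp: emeasure_space_1 elim!: eventually_mono)
  then show ?thesis
    by eventually_elim (simp add: max_def split: if_splits)
qed

lemma AE_eq_const_if_AE_pair_mult_eq_1:
  assumes "pair_prob_space P Q"
    and "{p \<in> space (P \<Otimes>\<^sub>M Q). f (fst p) * g (snd p) = (1 :: real)} \<in> sets (P \<Otimes>\<^sub>M Q)"
    and "AE p in P \<Otimes>\<^sub>M Q. f (fst p) * g (snd p) = 1"
  shows "\<exists>c. AE y in P. f y = c"
proof -
  interpret pair_prob_space P Q by (rule assms(1))
  have "AE z in Q. AE y in P. f y * g z = 1"
    using assms(2,3) by (simp add: AE_commute[symmetric] AE_pair_iff)
  then obtain z where "AE y in P. f y * g z = 1"
    using eventually_happens'[OF M2.ae_filter_bot] by blast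
  then have "AE y in P. f y = 1 / g z"
    by eventually_elim (metis nonzero_eq_divide_eq mult_zero_right zero_neq_one)
  then show ?thesis ..
qed

section \<open>The integrand of an F-norm\<close>

definition fnorm_integrand :: "nat \<Rightarrow> (nat \<Rightarrow> real) \<Rightarrow> (nat \<Rightarrow> real) \<Rightarrow> real" where
  "fnorm_integrand d x y = Max (insert \<bar>x 0\<bar> ((\<lambda>i. \<bar>x i\<bar> * y i) ` {1..d}))"

text \<open>F-norms as nonnegative integrals, so that Tonelli's theorem applies without
  integrability side conditions.\<close>

definition fnorm_nn :: "nat \<Rightarrow> (nat \<Rightarrow> real) measure \<Rightarrow> (nat \<Rightarrow> real) \<Rightarrow> ennreal" where
  "fnorm_nn d P x = (\<integral>\<^sup>+y. ennreal (fnorm_integrand d x y) \<partial>P)"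

definition vec_mult :: "nat \<Rightarrow> (nat \<Rightarrow> real) \<Rightarrow> (nat \<Rightarrow> real) \<Rightarrow> (nat \<Rightarrow> real)" where
  "vec_mult d y z = (\<lambda>i\<in>{1..d}. y i * z i)"

definition scale_coords :: "(nat \<Rightarrow> real) \<Rightarrow> (nat \<Rightarrow> real) \<Rightarrow> (nat \<Rightarrow> real)" where
  "scale_coords x y = (\<lambda>i. if i = 0 then x 0 else x i * y i)"

lemma measurable_coord_vec_space[measurable]:
  "i \<in> {1..d} \<Longrightarrow> (\<lambda>y. y i) \<in> borel_measurable (vec_space d)"
  unfolding vec_space_def by simp

lemma fnorm_integrand_eq_Max:
  "fnorm_integrand d x y = Max ((\<lambda>i. if i = 0 then \<bar>x 0\<bar> else \<bar>x i\<bar> * y i) ` {0..d})"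
proof -
  have "{0..d} = insert 0 {1..d}"
    by auto
  then show ?thesis
    unfolding fnorm_integrand_def by (auto intro!: arg_cong[where f=Max])
qed

lemma measurable_fnorm_integrand[measurable]:
  assumes [measurable]: "f \<in> measurable M (vec_space d)"
  shows "(\<lambda>w. fnorm_integrand d x (f w)) \<in> borel_measurable M"
proof -
  have "fnorm_integrand d x = (\<lambda>y. Max ((\<lambda>i. if i = 0 then \<bar>x 0\<bar> else \<bar>x i\<bar> * y i) ` {0..d}))"
    by (simp add: fun_eq_iff fnorm_integrand_eq_Max)
  also have "\<dots> \<in> borel_measurable (vec_space d)"
  proof (intro borel_measurable_Max)
    show "(\<lambda>y. if i = 0 then \<bar>x 0\<bar> else \<bar>x i\<bar> * y i) \<in> borel_measurable (vec_space d)"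
      if "i \<in> {0..d}" for i
      using that by (cases "i = 0") auto
  qed simp
  finally show ?thesis by measurable
qed

lemma measurable_vec_mult[measurable]:
  assumes "f \<in> measurable M (vec_space d)" "g \<in> measurable M (vec_space d)"
  shows "(\<lambda>w. vec_mult d (f w) (g w)) \<in> measurable M (vec_space d)"
  using assms unfolding vec_mult_def vec_space_def by measurable

lemma measurable_vec_mult_left[measurable]:
  assumes "f \<in> measurable M (vec_space d)"
  shows "(\<lambda>w. vec_mult d c (f w)) \<in> measurable M (vec_space d)"
  using assms unfolding vec_mult_def vec_space_def by measurable

lemma vec_mult_restrict_left: "vec_mult d (restrict c {1..d}) z = vec_mult d c z"
  and vec_mult_restrict_right: "vec_mult d y (restrict c {1..d}) = vec_mult d y c"
  by (auto simp: vec_mult_def fun_eq_iff)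

lemma vec_mult_assoc: "vec_mult d (vec_mult d y z) u = vec_mult d y (vec_mult d z u)"
  by (auto simp: vec_mult_def fun_eq_iff)

lemma fnorm_integrand_nonneg: "0 \<le> fnorm_integrand d x y"
  unfolding fnorm_integrand_def by (rule order.trans[OF abs_ge_zero Max_ge]) auto

lemma fnorm_integrand_le: "fnorm_integrand d x y \<le> \<bar>x 0\<bar> + (\<Sum>i\<in>{1..d}. \<bar>x i\<bar> * \<bar>y i\<bar>)"
proof -
  have "\<bar>x j\<bar> * y j \<le> (\<Sum>i\<in>{1..d}. \<bar>x i\<bar> * \<bar>y i\<bar>)" if "j \<in> {1..d}" for j
  proof -
    have "\<bar>x j\<bar> * y j \<le> \<bar>x j\<bar> * \<bar>y j\<bar>" by (simp add: mult_left_mono)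
    also have "\<dots> \<le> (\<Sum>i\<in>{1..d}. \<bar>x i\<bar> * \<bar>y i\<bar>)" using that by (intro member_le_sum) auto
    finally show ?thesis .
  qed
  moreover have "0 \<le> (\<Sum>i\<in>{1..d}. \<bar>x i\<bar> * \<bar>y i\<bar>)"
    by (intro sum_nonneg) auto
  ultimately show ?thesis
    unfolding fnorm_integrand_def by (intro Max.boundedI) (auto intro: add_increasing add_increasing2)
qed

lemma fnorm_integrand_cong:
  "(\<And>i. i \<in> {1..d} \<Longrightarrow> y i = y' i) \<Longrightarrow> fnorm_integrand d x y = fnorm_integrand d x y'"
  unfolding fnorm_integrand_def by (auto intro!: arg_cong[where f=Max])

lemma fnorm_integrand_coord:
  assumes "i \<in> {1..d}" "0 \<le> a"
  shows "fnorm_integrand d ((\<lambda>_. 0)(0 := a, i := 1)) y = max a (y i)"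
  unfolding fnorm_integrand_def
proof (rule Max_eqI)
  show "max a (y i) \<in> insert \<bar>((\<lambda>_. 0)(0 := a, i := 1)) 0\<bar> ((\<lambda>j. \<bar>((\<lambda>_. 0)(0 := a, i := 1)) j\<bar> * y j) ` {1..d})"
    using assms by (cases "a \<le> y i") (auto simp: max_def intro!: image_eqI[where x=i])
qed (use assms in auto)

lemma fnorm_integrand_vec_mult:
  assumes "\<forall>i\<in>{1..d}. 0 \<le> y i"
  shows "fnorm_integrand d x (vec_mult d y z) = fnorm_integrand d (scale_coords x y) z"
  unfolding fnorm_integrand_def vec_mult_def scale_coords_def using assms
  by (auto intro!: arg_cong[where f=Max] arg_cong[where f="insert _"] image_cong simp: abs_mult)

section \<open>Distributions of products\<close>

lemma sets_prod_gen[simp]: "sets (prod_gen d P Q) = sets (vec_space d)"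
  by (simp add: prod_gen_def)

lemma prod_gen_eq_distr: "prod_gen d P Q = distr (P \<Otimes>\<^sub>M Q) (vec_space d) (\<lambda>p. vec_mult d (fst p) (snd p))"
  by (simp add: prod_gen_def vec_mult_def case_prod_beta')

context
  fixes d :: nat and P Q :: "(nat \<Rightarrow> real) measure"
  assumes P: "prob_space P" "sets P = sets (vec_space d)"
    and Q: "prob_space Q" "sets Q = sets (vec_space d)"
begin

interpretation pair_prob_space P Q
  using P(1) Q(1) by (rule pair_prob_spaceI)

lemma prob_space_prod_gen: "prob_space (prod_gen d P Q)"
proof -
  note [measurable_cong] = P(2) Q(2)
  show ?thesis
    unfolding prod_gen_eq_distr by (intro P.prob_space_distr) measurable
qed

lemma nn_integral_prod_gen:
  assumes [measurable]: "f \<in> borel_measurable (vec_space d)"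
  shows "(\<integral>\<^sup>+w. f w \<partial>prod_gen d P Q) = (\<integral>\<^sup>+y. \<integral>\<^sup>+z. f (vec_mult d y z) \<partial>Q \<partial>P)"
proof -
  note [measurable_cong] = P(2) Q(2)
  show ?thesis
    unfolding prod_gen_eq_distr by (simp add: nn_integral_distr M2.nn_integral_fst[symmetric])
qed

lemma prod_gen_commute: "prod_gen d P Q = prod_gen d Q P"
proof -
  note [measurable_cong] = P(2) Q(2)
  have "prod_gen d P Q = distr (Q \<Otimes>\<^sub>M P) (vec_space d) (\<lambda>p. vec_mult d (snd p) (fst p))"
    unfolding prod_gen_eq_distr by (subst distr_pair_swap, subst distr_distr) (auto simp: comp_def case_prod_beta')
  also have "\<dots> = prod_gen d Q P"
    unfolding prod_gen_eq_distr vec_mult_def by (simp add: mult.commute)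
  finally show ?thesis .
qed

end

lemma prod_gen_assoc:
  assumes P: "prob_space P" "sets P = sets (vec_space d)"
    and Q: "prob_space Q" "sets Q = sets (vec_space d)"
    and R: "prob_space R" "sets R = sets (vec_space d)"
  shows "prod_gen d (prod_gen d P Q) R = prod_gen d P (prod_gen d Q R)"
proof (rule measure_eqI_nn_integral)
  interpret R: prob_space R by (rule R(1))
  note [measurable_cong] = R(2)
  have PQ: "prob_space (prod_gen d P Q)" and QR: "prob_space (prod_gen d Q R)"
    using P Q R by (auto intro: prob_space_prod_gen)
  fix f :: "(nat \<Rightarrow> real) \<Rightarrow> ennreal"
  assume "f \<in> borel_measurable (prod_gen d (prod_gen d P Q) R)"
  then have [measurable]: "f \<in> borel_measurable (vec_space d)"
    by (subst (asm) measurable_cong_sets[OF sets_prod_gen refl])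
  have "(\<integral>\<^sup>+w. f w \<partial>prod_gen d (prod_gen d P Q) R) = (\<integral>\<^sup>+v. \<integral>\<^sup>+u. f (vec_mult d v u) \<partial>R \<partial>prod_gen d P Q)"
    using PQ R by (intro nn_integral_prod_gen) auto
  also have "\<dots> = (\<integral>\<^sup>+y. \<integral>\<^sup>+z. \<integral>\<^sup>+u. f (vec_mult d (vec_mult d y z) u) \<partial>R \<partial>Q \<partial>P)"
  proof -
    have "(\<lambda>v. \<integral>\<^sup>+u. f (vec_mult d v u) \<partial>R) \<in> borel_measurable (vec_space d)"
      by (rule R.borel_measurable_nn_integral) (unfold case_prod_beta', measurable)
    then show ?thesis
      by (rule nn_integral_prod_gen[OF P Q])
  qed
  also have "\<dots> = (\<integral>\<^sup>+y. \<integral>\<^sup>+v. f (vec_mult d y v) \<partial>prod_gen d Q R \<partial>P)"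
  proof (rule nn_integral_cong)
    fix y :: "nat \<Rightarrow> real"
    have "(\<lambda>v. f (vec_mult d y v)) \<in> borel_measurable (vec_space d)"
      by measurable
    from nn_integral_prod_gen[OF Q R this] show "(\<integral>\<^sup>+z. \<integral>\<^sup>+u. f (vec_mult d (vec_mult d y z) u) \<partial>R \<partial>Q) = (\<integral>\<^sup>+v. f (vec_mult d y v) \<partial>prod_gen d Q R)"
      by (simp add: vec_mult_assoc)
  qed
  also have "\<dots> = (\<integral>\<^sup>+w. f w \<partial>prod_gen d P (prod_gen d Q R))"
    using P QR by (intro nn_integral_prod_gen[symmetric]) auto
  finally show "(\<integral>\<^sup>+w. f w \<partial>prod_gen d (prod_gen d P Q) R) = (\<integral>\<^sup>+w. f w \<partial>prod_gen d P (prod_gen d Q R))" .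
qed simp

lemma restrict_in_space_vec_space: "restrict c {1..d} \<in> space (vec_space d)"
  by (simp add: vec_space_def space_PiM)

lemma sets_const_gen[simp]: "sets (const_gen d c) = sets (vec_space d)"
  by (simp add: const_gen_def)

lemma prob_space_const_gen: "prob_space (const_gen d c)"
  unfolding const_gen_def by (rule prob_space_return[OF restrict_in_space_vec_space])

lemma const_gen_cong: "(\<And>i. i \<in> {1..d} \<Longrightarrow> c i = c' i) \<Longrightarrow> const_gen d c = const_gen d c'"
  unfolding const_gen_def by (metis restrict_ext)

lemma prod_gen_const_gen_left:
  assumes Q: "prob_space Q" "sets Q = sets (vec_space d)"
  shows "prod_gen d (const_gen d c) Q = distr Q (vec_space d) (vec_mult d c)"
proof (rule measure_eqI_nn_integral)
  interpret Q: prob_space Q by (rule Q(1))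
  note [measurable_cong] = Q(2)
  fix f :: "(nat \<Rightarrow> real) \<Rightarrow> ennreal"
  assume "f \<in> borel_measurable (prod_gen d (const_gen d c) Q)"
  then have [measurable]: "f \<in> borel_measurable (vec_space d)"
    by (subst (asm) measurable_cong_sets[OF sets_prod_gen refl])
  have g: "(\<lambda>y. \<integral>\<^sup>+z. f (vec_mult d y z) \<partial>Q) \<in> borel_measurable (vec_space d)"
    by (rule Q.borel_measurable_nn_integral) (unfold case_prod_beta', measurable)
  have "(\<integral>\<^sup>+w. f w \<partial>prod_gen d (const_gen d c) Q) = (\<integral>\<^sup>+y. \<integral>\<^sup>+z. f (vec_mult d y z) \<partial>Q \<partial>const_gen d c)"
    by (rule nn_integral_prod_gen[OF prob_space_const_gen sets_const_gen Q]) measurable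
  also have "\<dots> = (\<integral>\<^sup>+z. f (vec_mult d (restrict c {1..d}) z) \<partial>Q)"
    unfolding const_gen_def by (rule nn_integral_return[OF restrict_in_space_vec_space g])
  also have "\<dots> = (\<integral>\<^sup>+w. f w \<partial>distr Q (vec_space d) (vec_mult d c))"
    unfolding vec_mult_restrict_left by (rule nn_integral_distr[symmetric]) measurable
  finally show "(\<integral>\<^sup>+w. f w \<partial>prod_gen d (const_gen d c) Q) = (\<integral>\<^sup>+w. f w \<partial>distr Q (vec_space d) (vec_mult d c))" .
qed simp

lemma prod_gen_const_one_left:
  assumes Q: "prob_space Q" "sets Q = sets (vec_space d)"
  shows "prod_gen d (const_gen d (\<lambda>_. 1)) Q = Q"
proof -
  have "vec_mult d (\<lambda>_. 1) z = z" if "z \<in> space Q" for z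
    using that sets_eq_imp_space_eq[OF Q(2)]
    by (auto simp: vec_mult_def vec_space_def space_PiM PiE_def extensional_def)
  then have "distr Q (vec_space d) (vec_mult d (\<lambda>_. 1)) = distr Q Q (\<lambda>z. z)"
    using Q(2) by (intro distr_cong) auto
  then show ?thesis
    using Q by (simp add: prod_gen_const_gen_left)
qed

lemma prod_gen_const_gen: "prod_gen d (const_gen d c) (const_gen d c') = const_gen d (\<lambda>i. c i * c' i)"
proof -
  have mult_c: "vec_mult d c \<in> vec_space d \<rightarrow>\<^sub>M vec_space d"
    using measurable_vec_mult_left[OF measurable_ident] by simp
  have "prod_gen d (const_gen d c) (const_gen d c') = distr (const_gen d c') (vec_space d) (vec_mult d c)"
    by (rule prod_gen_const_gen_left[OF prob_space_const_gen sets_const_gen])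
  also have "\<dots> = return (vec_space d) (vec_mult d c (restrict c' {1..d}))"
    unfolding const_gen_def by (rule distr_return[OF mult_c restrict_in_space_vec_space])
  also have "\<dots> = const_gen d (\<lambda>i. c i * c' i)"
    unfolding vec_mult_restrict_right unfolding const_gen_def vec_mult_def ..
  finally show ?thesis .
qed

lemma condH_prob_space: "condH d P \<Longrightarrow> prob_space P"
  and condH_sets: "condH d P \<Longrightarrow> sets P = sets (vec_space d)"
  unfolding condH_def by auto

lemma condH_iff_nn_integral:
  "condH d P \<longleftrightarrow> prob_space P \<and> sets P = sets (vec_space d) \<and>
     (\<forall>i\<in>{1..d}. (AE y in P. 0 \<le> y i) \<and>
        0 < (\<integral>\<^sup>+y. ennreal (y i) \<partial>P) \<and> (\<integral>\<^sup>+y. ennreal (y i) \<partial>P) < \<infinity>)"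
proof -
  have "integrable P (\<lambda>y. y i) \<and> 0 < (\<integral>y. y i \<partial>P) \<longleftrightarrow>
      0 < (\<integral>\<^sup>+y. ennreal (y i) \<partial>P) \<and> (\<integral>\<^sup>+y. ennreal (y i) \<partial>P) < \<infinity>"
    if "sets P = sets (vec_space d)" "i \<in> {1..d}" "AE y in P. 0 \<le> y i" for i
    using that by (intro integrable_pos_iff_nn_integral) (simp_all add: measurable_cong_sets[OF that(1) refl])
  then show ?thesis
    unfolding condH_def by blast
qed

lemma AE_coord_prod_gen_iff:
  assumes "sets P = sets (vec_space d)" "sets Q = sets (vec_space d)" and i: "i \<in> {1..d}"
    and [measurable]: "Measurable.pred borel \<Phi>"
  shows "(AE w in prod_gen d P Q. \<Phi> (w i)) \<longleftrightarrow> (AE p in P \<Otimes>\<^sub>M Q. \<Phi> (fst p i * snd p i))"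
proof -
  note [measurable_cong] = assms(1,2) and [measurable] = i
  have "(\<lambda>p. vec_mult d (fst p) (snd p)) \<in> P \<Otimes>\<^sub>M Q \<rightarrow>\<^sub>M vec_space d"
    by measurable
  moreover have "{w \<in> space (vec_space d). \<Phi> (w i)} \<in> sets (vec_space d)"
    by measurable
  ultimately show ?thesis
    unfolding prod_gen_eq_distr using i by (simp add: AE_distr_iff vec_mult_def)
qed

lemma AE_coord_nonneg_prod_gen:
  assumes P: "prob_space P" "sets P = sets (vec_space d)" "AE y in P. 0 \<le> y i"
    and Q: "prob_space Q" "sets Q = sets (vec_space d)" "AE z in Q. 0 \<le> z i"
    and i: "i \<in> {1..d}"
  shows "AE w in prod_gen d P Q. 0 \<le> w i"
proof -
  interpret pair_prob_space P Q
    using P(1) Q(1) by (rule pair_prob_spaceI)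
  note [measurable_cong] = P(2) Q(2) and [measurable] = i
  have "AE p in P \<Otimes>\<^sub>M Q. 0 \<le> fst p i * snd p i"
    using P(3) Q(3) by (intro AE_pair_measure) (auto elim: eventually_mono)
  then show ?thesis
    using P(2) Q(2) i by (subst AE_coord_prod_gen_iff) auto
qed

lemma nn_integral_coord_prod_gen:
  assumes P: "prob_space P" "sets P = sets (vec_space d)" "AE y in P. 0 \<le> y i"
    and Q: "prob_space Q" "sets Q = sets (vec_space d)"
    and i: "i \<in> {1..d}"
  shows "(\<integral>\<^sup>+w. ennreal (w i) \<partial>prod_gen d P Q) = (\<integral>\<^sup>+y. ennreal (y i) \<partial>P) * (\<integral>\<^sup>+z. ennreal (z i) \<partial>Q)"
proof -
  note [measurable_cong] = P(2) Q(2) and [measurable] = i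
  have "(\<integral>\<^sup>+w. ennreal (w i) \<partial>prod_gen d P Q) = (\<integral>\<^sup>+y. \<integral>\<^sup>+z. ennreal (y i * z i) \<partial>Q \<partial>P)"
    using P Q i by (subst nn_integral_prod_gen) (auto simp: vec_mult_def)
  also have "\<dots> = (\<integral>\<^sup>+y. ennreal (y i) * (\<integral>\<^sup>+z. ennreal (z i) \<partial>Q) \<partial>P)"
    using P(3) by (intro nn_integral_cong_AE) (auto simp: ennreal_mult' nn_integral_cmult elim!: eventually_mono)
  also have "\<dots> = (\<integral>\<^sup>+y. ennreal (y i) \<partial>P) * (\<integral>\<^sup>+z. ennreal (z i) \<partial>Q)"
    by (simp add: nn_integral_multc)
  finally show ?thesis .
qed

lemma condH_prod_gen:
  assumes "condH d P" "condH d Q"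
  shows "condH d (prod_gen d P Q)"
  using assms unfolding condH_iff_nn_integral
  by (auto simp: prob_space_prod_gen AE_coord_nonneg_prod_gen nn_integral_coord_prod_gen ennreal_mult_less_top ennreal_zero_less_mult_iff)

lemma condH_const_gen:
  assumes "\<forall>i\<in>{1..d}. 0 < c i"
  shows "condH d (const_gen d c)"
  unfolding condH_iff_nn_integral
proof (intro conjI ballI prob_space_const_gen sets_const_gen)
  fix i assume [measurable]: "i \<in> {1..d}"
  have nonneg_pred: "Measurable.pred (vec_space d) (\<lambda>y. 0 \<le> y i)"
    by measurable
  show "AE y in const_gen d c. 0 \<le> y i"
    unfolding const_gen_def AE_return[OF restrict_in_space_vec_space nonneg_pred]
    using assms \<open>i \<in> {1..d}\<close> by (simp add: less_imp_le)
  have "(\<integral>\<^sup>+y. ennreal (y i) \<partial>const_gen d c) = ennreal (c i)"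
    unfolding const_gen_def using \<open>i \<in> {1..d}\<close>
    by (subst nn_integral_return[OF restrict_in_space_vec_space]) auto
  then show "0 < (\<integral>\<^sup>+y. ennreal (y i) \<partial>const_gen d c)" "(\<integral>\<^sup>+y. ennreal (y i) \<partial>const_gen d c) < \<infinity>"
    using assms \<open>i \<in> {1..d}\<close> by auto
qed

section \<open>F-norms of products\<close>

lemma integrable_fnorm_integrand:
  assumes "condH d P"
  shows "integrable P (fnorm_integrand d x)"
proof (rule Bochner_Integration.integrable_bound)
  note [measurable_cong] = condH_sets[OF assms]
  interpret prob_space P using assms by (rule condH_prob_space)
  show "integrable P (\<lambda>y. \<bar>x 0\<bar> + (\<Sum>i\<in>{1..d}. \<bar>x i\<bar> * \<bar>y i\<bar>))"
    using assms unfolding condH_def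
    by (intro Bochner_Integration.integrable_add integrable_const Bochner_Integration.integrable_sum
        Bochner_Integration.integrable_mult_right Bochner_Integration.integrable_abs) auto
  show "fnorm_integrand d x \<in> borel_measurable P"
    by measurable
  show "AE y in P. norm (fnorm_integrand d x y) \<le> norm (\<bar>x 0\<bar> + (\<Sum>i\<in>{1..d}. \<bar>x i\<bar> * \<bar>y i\<bar>))"
    using fnorm_integrand_le[of d x] by (auto simp: fnorm_integrand_nonneg intro: order.trans[OF _ abs_ge_self])
qed

lemma fnorm_nn_eq_fnorm:
  assumes "condH d P"
  shows "fnorm_nn d P x = ennreal (fnorm d P x)"
  unfolding fnorm_nn_def fnorm_def fnorm_integrand_def[symmetric]
  using integrable_fnorm_integrand[OF assms] by (intro nn_integral_eq_integral) (auto simp: fnorm_integrand_nonneg)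

lemma fnorm_eq_iff_fnorm_nn_eq:
  assumes "condH d P" "condH d Q"
  shows "fnorm d P = fnorm d Q \<longleftrightarrow> fnorm_nn d P = fnorm_nn d Q"
proof -
  have "0 \<le> fnorm d M x" for M x
    unfolding fnorm_def by (intro Bochner_Integration.integral_nonneg) (auto intro: order.trans[OF abs_ge_zero Max_ge])
  then show ?thesis
    using assms by (simp add: fun_eq_iff fnorm_nn_eq_fnorm)
qed

lemma fnorm_const_gen: "fnorm d (const_gen d c) x = fnorm_integrand d x c"
proof -
  have "fnorm d (const_gen d c) x = fnorm_integrand d x (restrict c {1..d})"
    unfolding fnorm_def fnorm_integrand_def[symmetric] const_gen_def
    by (rule integral_return[OF restrict_in_space_vec_space]) measurable
  also have "\<dots> = fnorm_integrand d x c"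
    by (rule fnorm_integrand_cong) simp
  finally show ?thesis .
qed

lemma sup_norm_eq_fnorm_const_one: "sup_norm d = fnorm d (const_gen d (\<lambda>_. 1))"
  unfolding fun_eq_iff fnorm_const_gen fnorm_integrand_eq_Max sup_norm_def
  by (intro allI arg_cong[where f=Max] image_cong) auto

lemma fnorm_nn_prod_gen:
  assumes P: "condH d P" and Q: "prob_space Q" "sets Q = sets (vec_space d)"
  shows "fnorm_nn d (prod_gen d P Q) x = (\<integral>\<^sup>+y. fnorm_nn d Q (scale_coords x y) \<partial>P)"
proof -
  have "AE y in P. \<forall>i\<in>{1..d}. 0 \<le> y i"
    using P unfolding condH_def by (intro AE_finite_allI) auto
  then have "(\<integral>\<^sup>+y. \<integral>\<^sup>+z. ennreal (fnorm_integrand d x (vec_mult d y z)) \<partial>Q \<partial>P) =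
      (\<integral>\<^sup>+y. fnorm_nn d Q (scale_coords x y) \<partial>P)"
    unfolding fnorm_nn_def by (intro nn_integral_cong_AE) (auto simp: fnorm_integrand_vec_mult elim!: eventually_mono)
  then show ?thesis
    unfolding fnorm_nn_def using condH_prob_space[OF P] condH_sets[OF P] Q
    by (subst nn_integral_prod_gen) auto
qed

lemma fnorm_prod_gen_cong:
  assumes P: "condH d P" "condH d P'" and Q: "condH d Q" "condH d Q'"
    and eq: "fnorm d P = fnorm d P'" "fnorm d Q = fnorm d Q'"
  shows "fnorm d (prod_gen d P Q) = fnorm d (prod_gen d P' Q')"
proof -
  note gen = condH_prob_space condH_sets
  have nn_eq: "fnorm_nn d P = fnorm_nn d P'" "fnorm_nn d Q = fnorm_nn d Q'"
    using eq P Q by (simp_all add: fnorm_eq_iff_fnorm_nn_eq)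
  have "fnorm_nn d (prod_gen d P Q) = fnorm_nn d (prod_gen d P Q')"
    using P Q by (simp add: fun_eq_iff fnorm_nn_prod_gen gen nn_eq(2))
  also have "\<dots> = fnorm_nn d (prod_gen d Q' P)"
    using prod_gen_commute[OF gen[OF P(1)] gen[OF Q(2)]] by simp
  also have "\<dots> = fnorm_nn d (prod_gen d Q' P')"
    using P Q by (simp add: fun_eq_iff fnorm_nn_prod_gen gen nn_eq(1))
  also have "\<dots> = fnorm_nn d (prod_gen d P' Q')"
    using prod_gen_commute[OF gen[OF P(2)] gen[OF Q(2)]] by simp
  finally show ?thesis
    using P Q by (simp add: fnorm_eq_iff_fnorm_nn_eq condH_prod_gen)
qed

lemma mem_fnorms_iff: "N \<in> fnorms d \<longleftrightarrow> (\<exists>P. condH d P \<and> N = fnorm d P)"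
  unfolding fnorms_def by blast

lemma fmult_fnorm:
  assumes "condH d P" "condH d Q"
  shows "fmult d (fnorm d P) (fnorm d Q) = fnorm d (prod_gen d P Q)"
proof -
  define P0 where "P0 = (SOME P0. condH d P0 \<and> fnorm d P0 = fnorm d P)"
  define Q0 where "Q0 = (SOME Q0. condH d Q0 \<and> fnorm d Q0 = fnorm d Q)"
  have "condH d P0 \<and> fnorm d P0 = fnorm d P"
    unfolding P0_def by (rule someI_ex) (use assms in blast)
  moreover have "condH d Q0 \<and> fnorm d Q0 = fnorm d Q"
    unfolding Q0_def by (rule someI_ex) (use assms in blast)
  ultimately have "fnorm d (prod_gen d P0 Q0) = fnorm d (prod_gen d P Q)"
    using assms by (intro fnorm_prod_gen_cong) auto
  then show ?thesis
    unfolding fmult_def P0_def[symmetric] Q0_def[symmetric] .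
qed

lemma comm_monoid_fnorm_monoid: "comm_monoid (fnorm_monoid d)"
proof (rule comm_monoidI)
  note gen = condH_prob_space condH_sets
  fix x y assume "x \<in> carrier (fnorm_monoid d)" "y \<in> carrier (fnorm_monoid d)"
  then obtain P Q where PQ: "condH d P" "condH d Q" "x = fnorm d P" "y = fnorm d Q"
    by (auto simp: fnorm_monoid_def mem_fnorms_iff)
  show "x \<otimes>\<^bsub>fnorm_monoid d\<^esub> y \<in> carrier (fnorm_monoid d)"
    using PQ by (auto simp: fnorm_monoid_def fmult_fnorm mem_fnorms_iff intro: condH_prod_gen)
  show "x \<otimes>\<^bsub>fnorm_monoid d\<^esub> y = y \<otimes>\<^bsub>fnorm_monoid d\<^esub> x"
    using PQ prod_gen_commute[OF gen[OF PQ(1)] gen[OF PQ(2)]] by (simp add: fnorm_monoid_def fmult_fnorm)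
next
  show "\<one>\<^bsub>fnorm_monoid d\<^esub> \<in> carrier (fnorm_monoid d)"
    using condH_const_gen[of d "\<lambda>_. 1"]
    by (auto simp: fnorm_monoid_def sup_norm_eq_fnorm_const_one mem_fnorms_iff)
next
  note gen = condH_prob_space condH_sets
  fix x y z
  assume "x \<in> carrier (fnorm_monoid d)" "y \<in> carrier (fnorm_monoid d)" "z \<in> carrier (fnorm_monoid d)"
  then obtain P Q R where PQR: "condH d P" "condH d Q" "condH d R" "x = fnorm d P" "y = fnorm d Q" "z = fnorm d R"
    by (auto simp: fnorm_monoid_def mem_fnorms_iff)
  show "x \<otimes>\<^bsub>fnorm_monoid d\<^esub> y \<otimes>\<^bsub>fnorm_monoid d\<^esub> z = x \<otimes>\<^bsub>fnorm_monoid d\<^esub> (y \<otimes>\<^bsub>fnorm_monoid d\<^esub> z)"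
    using PQR prod_gen_assoc[OF gen[OF PQR(1)] gen[OF PQR(2)] gen[OF PQR(3)]]
    by (simp add: fnorm_monoid_def fmult_fnorm condH_prod_gen)
next
  fix x assume "x \<in> carrier (fnorm_monoid d)"
  then obtain Q where Q: "condH d Q" "x = fnorm d Q"
    by (auto simp: fnorm_monoid_def mem_fnorms_iff)
  show "\<one>\<^bsub>fnorm_monoid d\<^esub> \<otimes>\<^bsub>fnorm_monoid d\<^esub> x = x"
    using Q condH_const_gen[of d "\<lambda>_. 1"] prod_gen_const_one_left[OF condH_prob_space condH_sets, OF Q(1) Q(1)]
    by (simp add: fnorm_monoid_def sup_norm_eq_fnorm_const_one fmult_fnorm)
qed

section \<open>Units\<close>

lemma AE_coord_eq_1_if_fnorm_eq_sup_norm: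
  assumes W: "condH d W" and eq: "fnorm d W = sup_norm d" and i: "i \<in> {1..d}"
  shows "AE w in W. w i = 1"
proof -
  interpret prob_space W by (rule condH_prob_space[OF W])
  note [measurable_cong] = condH_sets[OF W] and [measurable] = i
  have one: "condH d (const_gen d (\<lambda>_. 1))"
    by (rule condH_const_gen) simp
  have nn_eq: "fnorm_nn d W = fnorm_nn d (const_gen d (\<lambda>_. 1))"
    using eq W one by (simp add: sup_norm_eq_fnorm_const_one fnorm_eq_iff_fnorm_nn_eq)
  have max_eq_1: "(\<integral>\<^sup>+w. ennreal (max a (w i)) \<partial>W) = 1" if a: "0 \<le> a" "a \<le> 1" for a :: real
  proof -
    let ?x = "(\<lambda>_. 0)(0 := a, i := 1)"
    have "(\<integral>\<^sup>+w. ennreal (max a (w i)) \<partial>W) = fnorm_nn d W ?x"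
      unfolding fnorm_nn_def fnorm_integrand_coord[OF i a(1)] ..
    also have "\<dots> = fnorm_nn d (const_gen d (\<lambda>_. 1)) ?x"
      unfolding nn_eq ..
    also have "\<dots> = ennreal (max a 1)"
      unfolding fnorm_nn_eq_fnorm[OF one] fnorm_const_gen fnorm_integrand_coord[OF i a(1)] ..
    finally show ?thesis
      using a by simp
  qed
  then show ?thesis
    using max_eq_1[of 0] max_eq_1[of 1] by (intro AE_eq_1_if_nn_integral_max_eq_1) auto
qed

lemma fnorm_eq_fnorm_const_gen_if_AE:
  assumes "prob_space P" "sets P = sets (vec_space d)" and ae: "AE y in P. \<forall>i\<in>{1..d}. y i = c i"
  shows "fnorm d P = fnorm d (const_gen d c)"
proof
  fix x
  interpret prob_space P by (rule assms(1))
  note [measurable_cong] = assms(2)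
  have "fnorm d P x = (\<integral>y. fnorm_integrand d x y \<partial>P)"
    unfolding fnorm_def fnorm_integrand_def ..
  also have "\<dots> = (\<integral>y. fnorm_integrand d x c \<partial>P)"
    using ae by (intro integral_cong_AE) (auto elim!: eventually_mono intro: fnorm_integrand_cong)
  also have "\<dots> = fnorm d (const_gen d c) x"
    by (simp add: fnorm_const_gen prob_space)
  finally show "fnorm d P x = fnorm d (const_gen d c) x" .
qed

lemma ex_const_gen_if_fnorm_prod_gen_eq_sup_norm:
  assumes P: "condH d P" and Q: "condH d Q" and eq: "fnorm d (prod_gen d P Q) = sup_norm d"
  shows "\<exists>c. (\<forall>i\<in>{1..d}. 0 < c i) \<and> fnorm d P = fnorm d (const_gen d c)"
proof -
  interpret pair_prob_space P Q
    using P Q by (intro pair_prob_spaceI condH_prob_space)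
  note [measurable_cong] = condH_sets[OF P] condH_sets[OF Q]
  have "\<exists>ci. AE y in P. y i = ci" if i [measurable]: "i \<in> {1..d}" for i
  proof -
    have "AE w in prod_gen d P Q. w i = 1"
      by (rule AE_coord_eq_1_if_fnorm_eq_sup_norm[OF condH_prod_gen[OF P Q] eq i])
    then have "AE p in P \<Otimes>\<^sub>M Q. fst p i * snd p i = 1"
      using condH_sets[OF P] condH_sets[OF Q] i by (subst (asm) AE_coord_prod_gen_iff) auto
    moreover have "{p \<in> space (P \<Otimes>\<^sub>M Q). fst p i * snd p i = 1} \<in> sets (P \<Otimes>\<^sub>M Q)"
      by measurable
    ultimately show ?thesis
      using AE_eq_const_if_AE_pair_mult_eq_1[OF pair_prob_space_axioms, of "\<lambda>y. y i" "\<lambda>z. z i"] by simp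
  qed
  then obtain c where c: "\<And>i. i \<in> {1..d} \<Longrightarrow> AE y in P. y i = c i"
    by metis
  have "0 < c i" if i [measurable]: "i \<in> {1..d}" for i
  proof -
    have "(\<integral>y. y i \<partial>P) = (\<integral>y. c i \<partial>P)"
      using c[OF i] by (intro integral_cong_AE) auto
    moreover have "0 < (\<integral>y. y i \<partial>P)"
      using P i unfolding condH_def by blast
    ultimately show ?thesis
      by (simp add: M1.prob_space)
  qed
  moreover have "fnorm d P = fnorm d (const_gen d c)"
    using c P by (intro fnorm_eq_fnorm_const_gen_if_AE AE_finite_allI condH_prob_space condH_sets) auto
  ultimately show ?thesis
    by blast
qed

lemma Units_fnorm_monoid: "Units (fnorm_monoid d) = {fnorm d (const_gen d c) | c. \<forall>i\<in>{1..d}. 0 < c i}"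
proof (intro equalityI subsetI)
  fix N assume "N \<in> Units (fnorm_monoid d)"
  then obtain P Q where PQ: "condH d P" "condH d Q" and N: "N = fnorm d P"
    and "fmult d (fnorm d P) (fnorm d Q) = sup_norm d"
    unfolding Units_def fnorm_monoid_def by (auto simp: mem_fnorms_iff)
  then have "fnorm d (prod_gen d P Q) = sup_norm d"
    by (simp add: fmult_fnorm)
  then show "N \<in> {fnorm d (const_gen d c) | c. \<forall>i\<in>{1..d}. 0 < c i}"
    using ex_const_gen_if_fnorm_prod_gen_eq_sup_norm[OF PQ] N by auto
next
  fix N assume "N \<in> {fnorm d (const_gen d c) | c. \<forall>i\<in>{1..d}. 0 < c i}"
  then obtain c where c: "\<forall>i\<in>{1..d}. 0 < c i" and N: "N = fnorm d (const_gen d c)"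
    by blast
  let ?c' = "\<lambda>i. 1 / c i"
  have c': "\<forall>i\<in>{1..d}. 0 < ?c' i"
    using c by simp
  have "c i * ?c' i = 1" "?c' i * c i = 1" if "i \<in> {1..d}" for i
    using bspec[OF c that] by simp_all
  then have "prod_gen d (const_gen d c) (const_gen d ?c') = const_gen d (\<lambda>_. 1)"
    "prod_gen d (const_gen d ?c') (const_gen d c) = const_gen d (\<lambda>_. 1)"
    unfolding prod_gen_const_gen by (auto intro!: const_gen_cong)
  then show "N \<in> Units (fnorm_monoid d)"
    unfolding Units_def fnorm_monoid_def using condH_const_gen[OF c] condH_const_gen[OF c'] N
    by (auto simp: mem_fnorms_iff fmult_fnorm sup_norm_eq_fnorm_const_one
        intro!: bexI[where x = "fnorm d (const_gen d ?c')"])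
qed

theorem proposition4p4:
  fixes d :: nat
  assumes "1 \<le> d"
  shows "(\<forall>P P' Q Q'. condH d P \<and> condH d P' \<and> condH d Q \<and> condH d Q' \<and>
            fnorm d P = fnorm d P' \<and> fnorm d Q = fnorm d Q' \<longrightarrow>
            fnorm d (prod_gen d P Q) = fnorm d (prod_gen d P' Q'))
       \<and> comm_monoid (fnorm_monoid d)
       \<and> Units (fnorm_monoid d) =
           {fnorm d (const_gen d c) | c. \<forall>i\<in>{1..d}. 0 < c i}"
  using fnorm_prod_gen_cong comm_monoid_fnorm_monoid Units_fnorm_monoid by blast

end
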